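(* Let $G$ be a connected graph cellularly embedded on an orientable closed surface of genus $h\geq 0$. If $G$ has an even number of edges and has a perfect matching, then the total resonance graph $R_t(G)$ is bipartite.
   Context: A perfect matching of $G$ is a set of edges covering every vertex exactly once. A face of the embedding whose boundary is a cycle is said to have a facial cycle. The total resonance graph $R_t(G)$ has as vertices the perfect matchings of $G$, and two perfect matchings $M_1,M_2$ are adjacent if and only if the symmetric difference $M_1\oplus M_2=(M_1\setminus M_2)\cup(M_2\setminus M_1)$ is exactly the edge set of one facial cycle of $G$ (i.e. $M_2$ is obtained from $M_1$ by rotating along an $M_1$-alternating facial cycle). *)

theory Defs
  imports "HOL-Combinatorics.Permutations"
begin

text \<open>A graph cellularly embedded on an orientable closed surface is represented
  combinatorially by a rotation system (oriented combinatorial map):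
  a finite set of darts D (half-edges), a fixed-point-free involution alpha on D
  (pairing the two darts of each edge) and a permutation sigma of D (the cyclic
  order of darts around each vertex, given by the orientation).  Loops and multiple edges are allowed.\<close>

definition orb :: "('d \<Rightarrow> 'd) \<Rightarrow> 'd \<Rightarrow> 'd set" where
  "orb f d = {(f ^^ n) d | n. True}"

definition rotation_system :: "'d set \<Rightarrow> ('d \<Rightarrow> 'd) \<Rightarrow> ('d \<Rightarrow> 'd) \<Rightarrow> bool" where
  "rotation_system D \<alpha> \<sigma> \<longleftrightarrow> finite D \<and> \<alpha> permutes D \<and> \<sigma> permutes D \<and>
     (\<forall>d\<in>D. \<alpha> d \<noteq> d \<and> \<alpha> (\<alpha> d) = d)"

definition rs_vertices :: "'d set \<Rightarrow> ('d \<Rightarrow> 'd) \<Rightarrow> 'd set set" where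
  "rs_vertices D \<sigma> = {orb \<sigma> d | d. d \<in> D}"

definition rs_edge :: "('d \<Rightarrow> 'd) \<Rightarrow> 'd \<Rightarrow> 'd set" where
  "rs_edge \<alpha> d = {d, \<alpha> d}"

definition rs_edges :: "'d set \<Rightarrow> ('d \<Rightarrow> 'd) \<Rightarrow> 'd set set" where
  "rs_edges D \<alpha> = {rs_edge \<alpha> d | d. d \<in> D}"

definition rs_faces :: "'d set \<Rightarrow> ('d \<Rightarrow> 'd) \<Rightarrow> ('d \<Rightarrow> 'd) \<Rightarrow> 'd set set" where
  "rs_faces D \<alpha> \<sigma> = {orb (\<sigma> \<circ> \<alpha>) d | d. d \<in> D}"

definition rs_connected :: "'d set \<Rightarrow> ('d \<Rightarrow> 'd) \<Rightarrow> ('d \<Rightarrow> 'd) \<Rightarrow> bool" where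
  "rs_connected D \<alpha> \<sigma> \<longleftrightarrow>
     (\<forall>d\<in>D. \<forall>e\<in>D. (d, e) \<in> ({(x, \<sigma> x) | x. x \<in> D} \<union> {(x, \<alpha> x) | x. x \<in> D})\<^sup>*)"

text \<open>Perfect matching: a set of edges such that every vertex is covered by
  exactly one of them (counted by darts, so a loop would cover its vertex twice
  and is therefore excluded).\<close>
definition perfect_matching :: "'d set \<Rightarrow> ('d \<Rightarrow> 'd) \<Rightarrow> ('d \<Rightarrow> 'd) \<Rightarrow> 'd set set \<Rightarrow> bool" where
  "perfect_matching D \<alpha> \<sigma> M \<longleftrightarrow> M \<subseteq> rs_edges D \<alpha> \<and>
     (\<forall>v\<in>rs_vertices D \<sigma>. card (v \<inter> \<Union>M) = 1)"

text \<open>The boundary walk of the face F traverses the darts of F (each dart d is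
  the edge rs_edge alpha d leaving the vertex orb sigma d).  The face is a facial
  cycle iff this closed walk repeats neither vertices nor edges.\<close>
definition facial_cycle :: "'d set \<Rightarrow> ('d \<Rightarrow> 'd) \<Rightarrow> ('d \<Rightarrow> 'd) \<Rightarrow> 'd set \<Rightarrow> bool" where
  "facial_cycle D \<alpha> \<sigma> F \<longleftrightarrow> F \<in> rs_faces D \<alpha> \<sigma> \<and>
     inj_on (orb \<sigma>) F \<and> inj_on (rs_edge \<alpha>) F"

definition face_edges :: "('d \<Rightarrow> 'd) \<Rightarrow> 'd set \<Rightarrow> 'd set set" where
  "face_edges \<alpha> F = rs_edge \<alpha> ` F"

definition sym_diff :: "'a set \<Rightarrow> 'a set \<Rightarrow> 'a set" where
  "sym_diff A B = (A - B) \<union> (B - A)"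

definition total_res_adj :: "'d set \<Rightarrow> ('d \<Rightarrow> 'd) \<Rightarrow> ('d \<Rightarrow> 'd) \<Rightarrow> 'd set set \<Rightarrow> 'd set set \<Rightarrow> bool" where
  "total_res_adj D \<alpha> \<sigma> M1 M2 \<longleftrightarrow>
     perfect_matching D \<alpha> \<sigma> M1 \<and> perfect_matching D \<alpha> \<sigma> M2 \<and>
     (\<exists>F. facial_cycle D \<alpha> \<sigma> F \<and> sym_diff M1 M2 = face_edges \<alpha> F)"

definition bipartite :: "'v set \<Rightarrow> ('v \<Rightarrow> 'v \<Rightarrow> bool) \<Rightarrow> bool" where
  "bipartite V adj \<longleftrightarrow> (\<exists>X. \<forall>u\<in>V. \<forall>w\<in>V. adj u w \<longrightarrow> (u \<in> X \<longleftrightarrow> w \<notin> X))"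

definition total_resonance_bipartite :: "'d set \<Rightarrow> ('d \<Rightarrow> 'd) \<Rightarrow> ('d \<Rightarrow> 'd) \<Rightarrow> bool" where
  "total_resonance_bipartite D \<alpha> \<sigma> \<longleftrightarrow>
     bipartite {M. perfect_matching D \<alpha> \<sigma> M} (total_res_adj D \<alpha> \<sigma>)"

text \<open>Genus of the orientable surface of the cellular embedding, via Euler's formula
  V - E + F = 2 - 2h.\<close>
definition rs_genus :: "'d set \<Rightarrow> ('d \<Rightarrow> 'd) \<Rightarrow> ('d \<Rightarrow> 'd) \<Rightarrow> int" where
  "rs_genus D \<alpha> \<sigma> = (2 - (int (card (rs_vertices D \<sigma>)) - int (card (rs_edges D \<alpha>))
                          + int (card (rs_faces D \<alpha> \<sigma>)))) div 2"

end

theory Submission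
  imports Defs "HOL-Combinatorics.Cycles" "HOL-Combinatorics.Orbits"
begin

text \<open>The sign of a permutation of a finite set \<open>S\<close> is \<open>(-1)^(|S| - #orbits)\<close>.
  Applied to the face permutation \<open>\<phi> = \<sigma> \<circ> \<alpha>\<close> of the \<open>2E\<close> darts,
  \<open>sign \<phi> = sign \<sigma> \<cdot> sign \<alpha>\<close> gives \<open>V + E + F\<close> even, Euler's formula modulo 2;
  a perfect matching makes \<open>V\<close> even, so \<open>F\<close> is even.

  Adjacent perfect matchings differ by the mod-2 boundary of a single face.  The boundary
  map is additive and, the map being connected, vanishes only on \<open>{}\<close> and on the set of
  all faces, which has even size.  Hence if \<open>M \<oplus> M'\<close> is the boundary of \<open>T\<close>, the parity
  of \<open>|T|\<close> depends only on \<open>M\<close> and \<open>M'\<close>; colouring each perfect matching by this parity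
  relative to a base matching of its class is a proper 2-colouring.\<close>

lemma orb_eq_orbit: "permutation p \<Longrightarrow> orb p = orbit p"
  unfolding orb_def by (simp add: orbit_altdef_permutation fun_eq_iff)

lemma orbit_eq_of_mem: "permutation p \<Longrightarrow> y \<in> orbit p x \<Longrightarrow> orbit p y = orbit p x"
  by (rule orbit_cyclic_eq3[OF cyclic_on_orbit'])

lemma orbits_disjoint:
  "permutation p \<Longrightarrow> orbit p x \<noteq> orbit p y \<Longrightarrow> orbit p x \<inter> orbit p y = {}"
  using orbit_eq_of_mem[of p] by blast

lemma orbit_cycle_of_list:
  assumes "distinct cs" "x \<in> set cs"
  shows "orbit (cycle_of_list cs) x = set cs"
proof -
  obtain i where i: "i < length cs" "x = cs ! i"
    using assms(2) by (metis in_set_conv_nth)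
  have rotate: "(cycle_of_list cs ^^ n) x = cs ! ((i + n) mod length cs)" for n
  proof -
    have "(cycle_of_list cs ^^ n) x = rotate n cs ! i"
      using i cyclic_rotation[OF assms(1), of n, symmetric] by simp
    also have "\<dots> = cs ! ((i + n) mod length cs)"
      using i by (simp add: nth_rotate add.commute)
    finally show ?thesis .
  qed
  have "cs ! j = (cycle_of_list cs ^^ (j + length cs - i)) x" if "j < length cs" for j
    unfolding rotate using i that by simp
  then have "set cs \<subseteq> {(cycle_of_list cs ^^ n) x | n. True}"
    by (auto simp: in_set_conv_nth) blast
  moreover have "{(cycle_of_list cs ^^ n) x | n. True} \<subseteq> set cs"
    unfolding rotate using i by (auto intro!: nth_mem mod_less_divisor)
  ultimately show ?thesis
    by (simp add: orbit_altdef_permutation[OF permutation_of_cycle])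
qed

lemma evenperm_cycle_of_list:
  "distinct (x # cs) \<Longrightarrow> evenperm (cycle_of_list (x # cs)) \<longleftrightarrow> even (length cs)"
proof (induction cs arbitrary: x)
  case (Cons y cs)
  have "evenperm (cycle_of_list (x # y # cs))
          \<longleftrightarrow> (evenperm (transpose x y) \<longleftrightarrow> evenperm (cycle_of_list (y # cs)))"
    unfolding cycle_of_list.simps
    by (rule evenperm_comp) (simp_all add: permutation_swap_id permutation_of_cycle)
  with Cons show ?case
    by (simp add: evenperm_swap del: cycle_of_list.simps)
qed simp

lemma cycle_decomp_permutes: "cycle_decomp S p \<Longrightarrow> p permutes S"
proof (induction rule: cycle_decomp.induct)
  case (comp I p cs)
  show ?case
    by (rule permutes_compose[OF permutes_subset[OF comp.IH] permutes_subset[OF cycle_permutes]])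
       auto
qed (simp add: permutes_id id_def[symmetric])

text \<open>Each cycle of length \<open>n\<close> is a product of \<open>n - 1\<close> transpositions.\<close>
lemma evenperm_iff_card_orbits:
  assumes "p permutes S" "finite S"
  shows "evenperm p \<longleftrightarrow> even (card S + card (orbit p ` S))"
  using cycle_decomposition[OF assms] assms(2)
proof (induction rule: cycle_decomp.induct)
  case (comp I p cs)
  let ?c = "cycle_of_list cs"
  have p: "p permutes I" "finite I"
    using cycle_decomp_permutes[OF comp.hyps(1)] comp.prems by auto
  have p_eq: "(?c \<circ> p) y = p y" if "y \<in> I" for y
    using that p comp.hyps(3) by (metis comp_apply disjoint_iff id_outside_supp permutes_in_image)
  have c_eq: "(?c \<circ> p) y = ?c y" if "y \<in> set cs" for y
    using that p comp.hyps(3) by (simp add: permutes_not_in disjoint_iff)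
  have orbit_I: "orbit (?c \<circ> p) y = orbit p y" if "y \<in> I" for y
    using that p_eq p by (intro orbit_cong0[symmetric]) (auto simp: permutes_in_image)
  have orbit_cs: "orbit (?c \<circ> p) y = set cs" if "y \<in> set cs" for y
  proof -
    have "orbit (?c \<circ> p) y = orbit ?c y"
      using that c_eq cycle_permutes[of cs] by (intro orbit_cong0[symmetric]) (auto simp: permutes_in_image)
    then show ?thesis
      using orbit_cycle_of_list comp.hyps(2) that by simp
  qed
  have parity: "evenperm (?c \<circ> p) \<longleftrightarrow> (evenperm ?c \<longleftrightarrow> evenperm p)"
    using p by (intro evenperm_comp permutation_of_cycle) (auto simp: permutation_permutes)
  show ?case
  proof (cases cs)
    case Nil
    then show ?thesis
      using comp.IH p by simp
  next
    case (Cons x xs)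
    have "set cs \<notin> orbit p ` I"
      using permutes_orbit_subset[OF p(1)] comp.hyps(3) Cons by fastforce
    moreover have "orbit (?c \<circ> p) ` (set cs \<union> I) = insert (set cs) (orbit p ` I)"
      using orbit_I orbit_cs Cons by (auto simp: image_Un)
    ultimately have orbits: "card (orbit (?c \<circ> p) ` (set cs \<union> I)) = Suc (card (orbit p ` I))"
      using p by simp
    have darts: "card (set cs \<union> I) = Suc (length xs) + card I"
      using comp.hyps p Cons by (simp add: card_Un_disjoint distinct_card del: set_simps)
    have "evenperm ?c \<longleftrightarrow> even (length xs)"
      using evenperm_cycle_of_list comp.hyps(2) Cons by simp
    then show ?thesis
      unfolding parity orbits darts using comp.IH p by simp argo
  qed
qed simp

lemma sym_diff_iff: "x \<in> sym_diff A B \<longleftrightarrow> (x \<in> A \<longleftrightarrow> x \<notin> B)"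
  unfolding sym_diff_def by auto

lemma sym_diff_commute: "sym_diff A B = sym_diff B A"
  unfolding sym_diff_def by auto

lemma sym_diff_cancel: "sym_diff (sym_diff A B) (sym_diff B C) = sym_diff A C"
  unfolding sym_diff_def by auto

lemma sym_diff_self: "sym_diff A A = {}"
  unfolding sym_diff_def by auto

lemma sym_diff_subset: "A \<subseteq> C \<Longrightarrow> B \<subseteq> C \<Longrightarrow> sym_diff A B \<subseteq> C"
  unfolding sym_diff_def by auto

lemma even_card_sym_diff_iff:
  assumes "finite A" "finite B"
  shows "even (card (sym_diff A B)) \<longleftrightarrow> (even (card A) \<longleftrightarrow> even (card B))"
proof -
  have "card (sym_diff A B) = card (A - B) + card (B - A)"
    unfolding sym_diff_def using assms by (intro card_Un_disjoint) auto
  moreover have "card A = card (A - B) + card (A \<inter> B)" "card B = card (B - A) + card (A \<inter> B)"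
    using assms by (metis Int_commute card_Int_Diff finite_Int add.commute)+
  ultimately show ?thesis
    by presburger
qed

text \<open>Colour \<open>u\<close> by the cocycle \<open>c\<close> between a base point of its \<open>R\<close>-class and \<open>u\<close>.\<close>
lemma bipartiteI_cocycle:
  fixes R c :: "'v \<Rightarrow> 'v \<Rightarrow> bool"
  assumes "equivp R"
    and cocycle: "\<And>u w x. R u w \<Longrightarrow> R w x \<Longrightarrow> c u x \<longleftrightarrow> (c u w \<longleftrightarrow> \<not> c w x)"
    and adj: "\<And>u w. u \<in> V \<Longrightarrow> w \<in> V \<Longrightarrow> adj u w \<Longrightarrow> R u w \<and> c u w"
  shows "bipartite V adj"
proof -
  define base where "base u = (SOME r. R r u)" for u
  have base: "R (base u) u" for u
    unfolding base_def using equivp_reflp[OF assms(1)] by (rule someI)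
  have base_eq: "base u = base w" if "R u w" for u w
    unfolding base_def using that equivp_symp[OF assms(1)] equivp_transp[OF assms(1)] by metis
  have "u \<in> {u. c (base u) u} \<longleftrightarrow> w \<notin> {u. c (base u) u}" if "u \<in> V" "w \<in> V" "adj u w" for u w
    using adj[OF that] cocycle[OF base[of u]] base_eq[of u w] by auto
  then show ?thesis
    unfolding bipartite_def by blast
qed

locale oriented_map =
  fixes D :: "'d set" and \<alpha> \<sigma> :: "'d \<Rightarrow> 'd"
  assumes rotation_system: "rotation_system D \<alpha> \<sigma>"
begin

abbreviation \<phi> :: "'d \<Rightarrow> 'd" where "\<phi> \<equiv> \<sigma> \<circ> \<alpha>"

lemma finite_darts: "finite D"
  and alpha_permutes: "\<alpha> permutes D"
  and sigma_permutes: "\<sigma> permutes D"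
  and alpha_no_fixpoint: "d \<in> D \<Longrightarrow> \<alpha> d \<noteq> d"
  and alpha_involution: "d \<in> D \<Longrightarrow> \<alpha> (\<alpha> d) = d"
  using rotation_system unfolding rotation_system_def by auto

lemma phi_permutes: "\<phi> permutes D"
  by (rule permutes_compose[OF alpha_permutes sigma_permutes])

lemma permutation_alpha: "permutation \<alpha>"
  and permutation_sigma: "permutation \<sigma>"
  and permutation_phi: "permutation \<phi>"
  using alpha_permutes sigma_permutes phi_permutes finite_darts permutation_permutes by blast+

lemma alpha_in_darts: "d \<in> D \<Longrightarrow> \<alpha> d \<in> D"
  and sigma_in_darts: "d \<in> D \<Longrightarrow> \<sigma> d \<in> D"
  using alpha_permutes sigma_permutes by (simp_all add: permutes_in_image)

lemma orbit_alpha: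
  assumes "d \<in> D" shows "orbit \<alpha> d = rs_edge \<alpha> d"
proof
  show "orbit \<alpha> d \<subseteq> rs_edge \<alpha> d"
  proof
    fix y assume "y \<in> orbit \<alpha> d"
    then show "y \<in> rs_edge \<alpha> d"
      by induction (auto simp: rs_edge_def alpha_involution[OF assms])
  qed
  show "rs_edge \<alpha> d \<subseteq> orbit \<alpha> d"
    using orbit.base[of \<alpha> d] orbit.step[of "\<alpha> d" \<alpha> d] alpha_involution[OF assms]
    by (simp add: rs_edge_def)
qed

lemma vertices_eq: "rs_vertices D \<sigma> = orbit \<sigma> ` D"
  unfolding rs_vertices_def orb_eq_orbit[OF permutation_sigma] by blast

lemma edges_eq: "rs_edges D \<alpha> = orbit \<alpha> ` D"
  unfolding rs_edges_def using orbit_alpha by (auto simp: image_def)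

lemma faces_eq: "rs_faces D \<alpha> \<sigma> = orbit \<phi> ` D"
  unfolding rs_faces_def orb_eq_orbit[OF permutation_phi] by blast

lemma finite_faces: "finite (rs_faces D \<alpha> \<sigma>)"
  unfolding faces_eq using finite_darts by simp

lemma card_edge: "e \<in> rs_edges D \<alpha> \<Longrightarrow> card e = 2"
  unfolding rs_edges_def rs_edge_def using alpha_no_fixpoint by fastforce

lemma edge_subset_darts: "e \<in> rs_edges D \<alpha> \<Longrightarrow> e \<subseteq> D"
  unfolding rs_edges_def rs_edge_def using alpha_in_darts by blast

lemma edges_disjoint:
  "e \<in> rs_edges D \<alpha> \<Longrightarrow> e' \<in> rs_edges D \<alpha> \<Longrightarrow> e \<noteq> e' \<Longrightarrow> e \<inter> e' = {}"
  unfolding edges_eq using orbits_disjoint[OF permutation_alpha] by blast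

lemma card_Union_edges:
  assumes "M \<subseteq> rs_edges D \<alpha>" shows "card (\<Union>M) = 2 * card M"
proof -
  have "finite M"
    using finite_subset[OF assms] finite_darts by (simp add: edges_eq)
  moreover have "finite (\<Union>M)"
    using assms edge_subset_darts finite_darts by (meson Union_least finite_subset subset_iff)
  ultimately show ?thesis
    using assms card_edge edges_disjoint by (intro card_partition[symmetric]) blast+
qed

lemma card_darts: "card D = 2 * card (rs_edges D \<alpha>)"
proof -
  have "\<Union>(rs_edges D \<alpha>) = D"
    using edge_subset_darts unfolding rs_edges_def rs_edge_def by blast
  then show ?thesis
    using card_Union_edges[of "rs_edges D \<alpha>"] by simp
qed

lemma even_card_vertices:
  assumes "perfect_matching D \<alpha> \<sigma> M"
  shows "even (card (rs_vertices D \<sigma>))"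
proof -
  have M: "M \<subseteq> rs_edges D \<alpha>" and one: "\<And>v. v \<in> rs_vertices D \<sigma> \<Longrightarrow> card (v \<inter> \<Union>M) = 1"
    using assms unfolding perfect_matching_def by auto
  have covered: "\<Union>M \<subseteq> D"
    using M edge_subset_darts by blast
  have "2 * card M = card (\<Union>M)"
    using card_Union_edges[OF M] by simp
  also have "\<Union>M = (\<Union>v\<in>rs_vertices D \<sigma>. v \<inter> \<Union>M)"
    using covered permutation_self_in_orbit[OF permutation_sigma] by (auto simp: vertices_eq)
  also have "card \<dots> = (\<Sum>v\<in>rs_vertices D \<sigma>. card (v \<inter> \<Union>M))"
    using finite_darts finite_subset[OF covered] orbits_disjoint[OF permutation_sigma]
    by (intro card_UN_disjoint) (auto simp: vertices_eq)
  also have "\<dots> = card (rs_vertices D \<sigma>)"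
    using one by simp
  finally show ?thesis
    by (metis dvd_triv_left)
qed

lemma even_card_vertices_edges_faces:
  "even (card (rs_vertices D \<sigma>) + card (rs_edges D \<alpha>) + card (rs_faces D \<alpha> \<sigma>))"
proof -
  have "evenperm \<phi> \<longleftrightarrow> (evenperm \<sigma> \<longleftrightarrow> evenperm \<alpha>)"
    by (rule evenperm_comp[OF permutation_sigma permutation_alpha])
  moreover have "evenperm \<phi> \<longleftrightarrow> even (card D + card (rs_faces D \<alpha> \<sigma>))"
    unfolding faces_eq by (rule evenperm_iff_card_orbits[OF phi_permutes finite_darts])
  moreover have "evenperm \<sigma> \<longleftrightarrow> even (card D + card (rs_vertices D \<sigma>))"
    unfolding vertices_eq by (rule evenperm_iff_card_orbits[OF sigma_permutes finite_darts])
  moreover have "evenperm \<alpha> \<longleftrightarrow> even (card D + card (rs_edges D \<alpha>))"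
    unfolding edges_eq by (rule evenperm_iff_card_orbits[OF alpha_permutes finite_darts])
  ultimately show ?thesis
    unfolding card_darts by auto
qed

text \<open>The two sides of the edge \<open>{d, \<alpha> d}\<close> are the faces through \<open>d\<close> and \<open>\<alpha> d\<close>,
  so this is the mod-2 boundary of the set of faces \<open>T\<close>.\<close>
definition face_boundary :: "'d set set \<Rightarrow> 'd set set" where
  "face_boundary T = {rs_edge \<alpha> d | d. d \<in> D \<and> (orbit \<phi> d \<in> T \<longleftrightarrow> orbit \<phi> (\<alpha> d) \<notin> T)}"

lemma rs_edge_alpha: "d \<in> D \<Longrightarrow> rs_edge \<alpha> (\<alpha> d) = rs_edge \<alpha> d"
  unfolding rs_edge_def using alpha_involution by auto

lemma rs_edge_eq_iff: "d \<in> D \<Longrightarrow> rs_edge \<alpha> d' = rs_edge \<alpha> d \<longleftrightarrow> d' = d \<or> d' = \<alpha> d"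
  unfolding rs_edge_def using alpha_involution by (metis doubleton_eq_iff)

lemma edge_in_face_boundary_iff:
  assumes "d \<in> D"
  shows "rs_edge \<alpha> d \<in> face_boundary T \<longleftrightarrow> (orbit \<phi> d \<in> T \<longleftrightarrow> orbit \<phi> (\<alpha> d) \<notin> T)"
proof
  assume "rs_edge \<alpha> d \<in> face_boundary T"
  then obtain d' where d': "d' \<in> D" "rs_edge \<alpha> d = rs_edge \<alpha> d'"
    "orbit \<phi> d' \<in> T \<longleftrightarrow> orbit \<phi> (\<alpha> d') \<notin> T"
    unfolding face_boundary_def by blast
  then show "orbit \<phi> d \<in> T \<longleftrightarrow> orbit \<phi> (\<alpha> d) \<notin> T"
    using rs_edge_eq_iff[OF d'(1), of d] alpha_involution[OF d'(1)] by auto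
qed (use assms in \<open>auto simp: face_boundary_def\<close>)

lemma face_boundary_subset_edges: "face_boundary T \<subseteq> rs_edges D \<alpha>"
  unfolding face_boundary_def rs_edges_def by blast

lemma face_boundary_empty: "face_boundary {} = {}"
  unfolding face_boundary_def by blast

lemma face_boundary_sym_diff:
  "face_boundary (sym_diff T T') = sym_diff (face_boundary T) (face_boundary T')"
proof (rule set_eqI)
  fix e
  show "e \<in> face_boundary (sym_diff T T') \<longleftrightarrow> e \<in> sym_diff (face_boundary T) (face_boundary T')"
  proof (cases "e \<in> rs_edges D \<alpha>")
    case True
    then obtain d where "d \<in> D" "e = rs_edge \<alpha> d"
      unfolding rs_edges_def by blast
    then show ?thesis
      by (simp add: edge_in_face_boundary_iff sym_diff_iff) blast
  next
    case False
    then show ?thesis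
      using face_boundary_subset_edges by (auto simp: sym_diff_iff)
  qed
qed

lemma orbit_phi_sigma: "d \<in> D \<Longrightarrow> orbit \<phi> (\<sigma> d) = orbit \<phi> (\<alpha> d)"
  using permutation_orbit_step[OF permutation_phi, of "\<alpha> d"] alpha_involution by simp

text \<open>Membership in \<open>T\<close> of the face through a dart is invariant under \<open>\<alpha>\<close> and \<open>\<sigma>\<close>,
  hence constant on the connected map.\<close>
lemma face_boundary_eq_empty:
  assumes connected: "rs_connected D \<alpha> \<sigma>"
    and T: "T \<subseteq> rs_faces D \<alpha> \<sigma>" and empty: "face_boundary T = {}"
  shows "T = {} \<or> T = rs_faces D \<alpha> \<sigma>"
proof -
  have alpha_step: "orbit \<phi> (\<alpha> d) \<in> T \<longleftrightarrow> orbit \<phi> d \<in> T" if "d \<in> D" for d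
    using edge_in_face_boundary_iff[OF that, of T] empty by blast
  let ?R = "{(x, \<sigma> x) | x. x \<in> D} \<union> {(x, \<alpha> x) | x. x \<in> D}"
  have invariant: "orbit \<phi> e \<in> T \<longleftrightarrow> orbit \<phi> d \<in> T" if "(d, e) \<in> ?R\<^sup>*" "d \<in> D" for d e
    using that(1)
  proof (induction rule: rtrancl_induct)
    case (step y z)
    have "y \<in> D"
      using step.hyps(1) that(2) by (induction rule: rtrancl_induct) (auto simp: alpha_in_darts sigma_in_darts)
    moreover have "z = \<sigma> y \<or> z = \<alpha> y"
      using step.hyps(2) by blast
    ultimately show ?case
      using step.IH alpha_step[OF \<open>y \<in> D\<close>] orbit_phi_sigma[OF \<open>y \<in> D\<close>] by (auto simp: comp_def)
  qed simp
  show ?thesis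
  proof (cases "T = {}")
    case False
    then obtain d where d: "d \<in> D" "orbit \<phi> d \<in> T"
      using T unfolding faces_eq by blast
    have "orbit \<phi> e \<in> T" if "e \<in> D" for e
      using invariant[of d e] connected d that unfolding rs_connected_def by blast
    then show ?thesis
      using T unfolding faces_eq by blast
  qed simp
qed

lemma face_subset_darts: "F \<in> rs_faces D \<alpha> \<sigma> \<Longrightarrow> F \<subseteq> D"
  unfolding faces_eq using permutes_orbit_subset[OF phi_permutes] by blast

lemma mem_face_iff: "F \<in> rs_faces D \<alpha> \<sigma> \<Longrightarrow> d \<in> F \<longleftrightarrow> orbit \<phi> d = F"
  unfolding faces_eq
  using orbit_eq_of_mem[OF permutation_phi] permutation_self_in_orbit[OF permutation_phi] by blast

lemma alpha_notin_facial_cycle: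
  assumes "facial_cycle D \<alpha> \<sigma> F" "d \<in> F"
  shows "\<alpha> d \<notin> F"
proof
  assume "\<alpha> d \<in> F"
  moreover have "d \<in> D"
    using assms face_subset_darts unfolding facial_cycle_def by blast
  moreover have "inj_on (rs_edge \<alpha>) F"
    using assms unfolding facial_cycle_def by blast
  ultimately have "\<alpha> d = d"
    using assms(2) rs_edge_alpha unfolding inj_on_def by blast
  then show False
    using alpha_no_fixpoint \<open>d \<in> D\<close> by blast
qed

lemma face_boundary_facial_cycle:
  assumes "facial_cycle D \<alpha> \<sigma> F"
  shows "face_boundary {F} = face_edges \<alpha> F"
proof (rule set_eqI)
  have F: "F \<in> rs_faces D \<alpha> \<sigma>"
    using assms unfolding facial_cycle_def by blast
  fix e
  show "e \<in> face_boundary {F} \<longleftrightarrow> e \<in> face_edges \<alpha> F"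
  proof (cases "e \<in> rs_edges D \<alpha>")
    case True
    then obtain d where d: "d \<in> D" "e = rs_edge \<alpha> d"
      unfolding rs_edges_def by blast
    have "e \<in> face_edges \<alpha> F \<longleftrightarrow> (\<exists>d'\<in>F. rs_edge \<alpha> d' = rs_edge \<alpha> d)"
      unfolding face_edges_def d(2) by auto
    also have "\<dots> \<longleftrightarrow> d \<in> F \<or> \<alpha> d \<in> F"
      using rs_edge_eq_iff[OF d(1)] by auto
    finally show ?thesis
      using d alpha_notin_facial_cycle[OF assms] mem_face_iff[OF F] alpha_involution[OF d(1)]
        edge_in_face_boundary_iff[OF d(1)]
      by auto
  next
    case False
    then show ?thesis
      using face_boundary_subset_edges face_subset_darts[OF F]
      unfolding face_edges_def rs_edges_def by blast
  qed
qed

lemma even_card_eq_if_face_boundary_eq: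
  assumes "rs_connected D \<alpha> \<sigma>" "even (card (rs_faces D \<alpha> \<sigma>))"
    and "T \<subseteq> rs_faces D \<alpha> \<sigma>" "T' \<subseteq> rs_faces D \<alpha> \<sigma>" "face_boundary T = face_boundary T'"
  shows "even (card T) \<longleftrightarrow> even (card T')"
proof -
  have "face_boundary (sym_diff T T') = {}"
    using assms(5) by (simp add: face_boundary_sym_diff sym_diff_self)
  then have "sym_diff T T' = {} \<or> sym_diff T T' = rs_faces D \<alpha> \<sigma>"
    using face_boundary_eq_empty[OF assms(1)] sym_diff_subset[OF assms(3,4)] by blast
  then have "even (card (sym_diff T T'))"
    using assms(2) by auto
  moreover have "finite T" "finite T'"
    using assms(3,4) finite_faces finite_subset by blast+
  ultimately show ?thesis
    using even_card_sym_diff_iff by blast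
qed

lemma sym_diff_face_boundary_trans:
  assumes "sym_diff A B = face_boundary T" "sym_diff B C = face_boundary T'"
  shows "sym_diff A C = face_boundary (sym_diff T T')"
  using assms sym_diff_cancel[of A B C] face_boundary_sym_diff[of T T'] by simp

definition homologous :: "'d set set \<Rightarrow> 'd set set \<Rightarrow> bool" where
  "homologous A B \<longleftrightarrow> (\<exists>T \<subseteq> rs_faces D \<alpha> \<sigma>. sym_diff A B = face_boundary T)"

definition odd_homologous :: "'d set set \<Rightarrow> 'd set set \<Rightarrow> bool" where
  "odd_homologous A B \<longleftrightarrow>
     (\<exists>T \<subseteq> rs_faces D \<alpha> \<sigma>. sym_diff A B = face_boundary T \<and> odd (card T))"

lemma equivp_homologous: "equivp homologous"
proof (rule equivpI)
  show "reflp homologous"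
    by (rule reflpI)
       (auto simp: homologous_def sym_diff_self face_boundary_empty intro!: exI[of _ "{}"])
  show "symp homologous"
    by (rule sympI) (simp add: homologous_def sym_diff_commute)
  show "transp homologous"
  proof (rule transpI)
    fix A B C assume "homologous A B" "homologous B C"
    then obtain T T' where T: "T \<subseteq> rs_faces D \<alpha> \<sigma>" "sym_diff A B = face_boundary T"
      and T': "T' \<subseteq> rs_faces D \<alpha> \<sigma>" "sym_diff B C = face_boundary T'"
      unfolding homologous_def by blast
    show "homologous A C"
      unfolding homologous_def
      using sym_diff_face_boundary_trans[OF T(2) T'(2)] sym_diff_subset[OF T(1) T'(1)] by blast
  qed
qed

lemma odd_homologous_iff:
  assumes "rs_connected D \<alpha> \<sigma>" "even (card (rs_faces D \<alpha> \<sigma>))"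
    and "T \<subseteq> rs_faces D \<alpha> \<sigma>" "sym_diff A B = face_boundary T"
  shows "odd_homologous A B \<longleftrightarrow> odd (card T)"
proof
  assume "odd_homologous A B"
  then obtain T' where "T' \<subseteq> rs_faces D \<alpha> \<sigma>" "face_boundary T = face_boundary T'" "odd (card T')"
    using assms(4) unfolding odd_homologous_def by auto
  then show "odd (card T)"
    using even_card_eq_if_face_boundary_eq[OF assms(1-3)] by blast
qed (use assms(3,4) in \<open>auto simp: odd_homologous_def\<close>)

lemma odd_homologous_cocycle:
  assumes "rs_connected D \<alpha> \<sigma>" "even (card (rs_faces D \<alpha> \<sigma>))"
    and "homologous u w" "homologous w x"
  shows "odd_homologous u x \<longleftrightarrow> (odd_homologous u w \<longleftrightarrow> \<not> odd_homologous w x)"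
proof -
  obtain T T' where T: "T \<subseteq> rs_faces D \<alpha> \<sigma>" "sym_diff u w = face_boundary T"
    and T': "T' \<subseteq> rs_faces D \<alpha> \<sigma>" "sym_diff w x = face_boundary T'"
    using assms(3,4) unfolding homologous_def by blast
  have "sym_diff u x = face_boundary (sym_diff T T')"
    using T(2) T'(2) by (rule sym_diff_face_boundary_trans)
  then have "odd_homologous u x \<longleftrightarrow> odd (card (sym_diff T T'))"
    by (rule odd_homologous_iff[OF assms(1,2) sym_diff_subset[OF T(1) T'(1)]])
  also have "\<dots> \<longleftrightarrow> (odd (card T) \<longleftrightarrow> \<not> odd (card T'))"
    using even_card_sym_diff_iff finite_subset[OF T(1) finite_faces] finite_subset[OF T'(1) finite_faces]
    by blast
  also have "\<dots> \<longleftrightarrow> (odd_homologous u w \<longleftrightarrow> \<not> odd_homologous w x)"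
    using odd_homologous_iff[OF assms(1,2) T] odd_homologous_iff[OF assms(1,2) T'] by simp
  finally show ?thesis .
qed

lemma total_res_adj_odd_homologous:
  assumes "total_res_adj D \<alpha> \<sigma> M M'"
  shows "homologous M M' \<and> odd_homologous M M'"
proof -
  obtain F where F: "facial_cycle D \<alpha> \<sigma> F" "sym_diff M M' = face_edges \<alpha> F"
    using assms unfolding total_res_adj_def by blast
  have "{F} \<subseteq> rs_faces D \<alpha> \<sigma>"
    using F(1) unfolding facial_cycle_def by blast
  moreover have "sym_diff M M' = face_boundary {F}"
    using F face_boundary_facial_cycle by simp
  ultimately show ?thesis
    unfolding homologous_def odd_homologous_def by (intro conjI exI[of _ "{F}"]) simp_all
qed

end

theorem theorem2p6:
  fixes D :: "'d set" and \<alpha> \<sigma> :: "'d \<Rightarrow> 'd" and h :: nat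
  assumes "rotation_system D \<alpha> \<sigma>"
    and "rs_connected D \<alpha> \<sigma>"
    and "rs_genus D \<alpha> \<sigma> = int h"
    and "even (card (rs_edges D \<alpha>))"
    and "\<exists>M. perfect_matching D \<alpha> \<sigma> M"
  shows "total_resonance_bipartite D \<alpha> \<sigma>"
proof -
  interpret oriented_map D \<alpha> \<sigma>
    by (rule oriented_map.intro) fact
  have even_faces: "even (card (rs_faces D \<alpha> \<sigma>))"
    using assms(4,5) even_card_vertices even_card_vertices_edges_faces by auto
  show ?thesis
    unfolding total_resonance_bipartite_def
  proof (rule bipartiteI_cocycle[OF equivp_homologous])
    show "odd_homologous u x \<longleftrightarrow> (odd_homologous u w \<longleftrightarrow> \<not> odd_homologous w x)"
      if "homologous u w" "homologous w x" for u w x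
      using odd_homologous_cocycle[OF assms(2) even_faces that] .
  qed (rule total_res_adj_odd_homologous)
qed

end
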